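(* Let $N\ge1$, $H=(H_1,\dots,H_N)\in]0,1[^N$, $a\in\mathbb{R}^N\setminus\{(0,\dots,0)\}$, let $S^H(a)$ be the mixed sub-fractional Brownian motion with parameters $N,a,H$, and for $0\le u<v\le s<t$ let $C_{u,v,s,t}=\mathrm{Cov}\big(S^H_v(a)-S^H_u(a),\,S^H_t(a)-S^H_s(a)\big)$. Then for all $0\le u<v\le s<t$: (1) $C_{u,v,s,t}=0$ if $H_i=1/2$ for every $i\in\{1,\dots,N\}$; (2) $C_{u,v,s,t}>0$ if $H_i>1/2$ for every $i\in\{1,\dots,N\}$; (3) $C_{u,v,s,t}<0$ if $H_i<1/2$ for every $i\in\{1,\dots,N\}$.
   Context: Let $(\Omega,\mathcal F,\mathbb P)$ be a probability space. For $K\in]0,1[$, a fractional Brownian motion on $\mathbb{R}$ with Hurst index $K$ is a continuous centered Gaussian process $\{B^K(t),t\in\mathbb{R}\}$ with $\mathrm{Cov}(B^K(t),B^K(s))=\frac12(|t|^{2K}+|s|^{2K}-|t-s|^{2K})$. The sub-fractional Brownian motion (sfBm) of index $K$ is $\xi^K_t=(B^K_t+B^K_{-t})/\sqrt2$, $t\ge0$; it is a continuous centered Gaussian process with $\mathrm{Cov}(\xi^K_t,\xi^K_s)=s^{2K}+t^{2K}-\frac12\big((s+t)^{2K}+|t-s|^{2K}\big)$. For $N\ge1$, $H\in]0,1[^N$, $a\in\mathbb{R}^N\setminus\{0\}$, the mixed sub-fractional Brownian motion (msfBm) is $S^H_t(a)=\sum_{i=1}^N a_i\xi^{H_i}(t)$,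 $t\ge0$, where $\xi^{H_1},\dots,\xi^{H_N}$ are independent sfBms with indices $H_1,\dots,H_N$. *)

theory Defs
  imports "HOL-Probability.Probability"
begin

definition cov :: "'a measure \<Rightarrow> ('a \<Rightarrow> real) \<Rightarrow> ('a \<Rightarrow> real) \<Rightarrow> real" where
  "cov M X Y = (\<integral>\<omega>. (X \<omega> - (\<integral>\<eta>. X \<eta> \<partial>M)) * (Y \<omega> - (\<integral>\<eta>. Y \<eta> \<partial>M)) \<partial>M)"

definition gaussian_rv :: "'a measure \<Rightarrow> ('a \<Rightarrow> real) \<Rightarrow> bool" where
  "gaussian_rv M X \<longleftrightarrow>
     (\<exists>\<mu> \<sigma>. \<sigma> > 0 \<and> distributed M lborel X (normal_density \<mu> \<sigma>)) \<or>
     (\<exists>c. AE \<omega> in M. X \<omega> = c)"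

definition centered_gaussian_process ::
    "'a measure \<Rightarrow> real set \<Rightarrow> (real \<Rightarrow> 'a \<Rightarrow> real) \<Rightarrow> bool" where
  "centered_gaussian_process M T X \<longleftrightarrow>
     (\<forall>t\<in>T. X t \<in> borel_measurable M \<and> integrable M (\<lambda>\<omega>. (X t \<omega>)\<^sup>2) \<and>
             (\<integral>\<omega>. X t \<omega> \<partial>M) = 0) \<and>
     (\<forall>F c. finite F \<longrightarrow> F \<subseteq> T \<longrightarrow> gaussian_rv M (\<lambda>\<omega>. \<Sum>t\<in>F. c t * X t \<omega>)) \<and>
     (\<forall>\<omega>\<in>space M. continuous_on T (\<lambda>t. X t \<omega>))"

definition fbm :: "'a measure \<Rightarrow> real \<Rightarrow> (real \<Rightarrow> 'a \<Rightarrow> real) \<Rightarrow> bool" where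
  "fbm M K B \<longleftrightarrow> prob_space M \<and> 0 < K \<and> K < 1 \<and>
     centered_gaussian_process M UNIV B \<and>
     (\<forall>t s. cov M (B t) (B s) = (\<bar>t\<bar> powr (2*K) + \<bar>s\<bar> powr (2*K) - \<bar>t - s\<bar> powr (2*K)) / 2)"

definition sfbm :: "'a measure \<Rightarrow> real \<Rightarrow> (real \<Rightarrow> 'a \<Rightarrow> real) \<Rightarrow> bool" where
  "sfbm M K \<xi> \<longleftrightarrow> (\<exists>B. fbm M K B \<and>
     (\<forall>t\<ge>0. \<forall>\<omega>\<in>space M. \<xi> t \<omega> = (B t \<omega> + B (-t) \<omega>) / sqrt 2))"

definition msfbm :: "'a measure \<Rightarrow> nat \<Rightarrow> (nat \<Rightarrow> real) \<Rightarrow> (nat \<Rightarrow> real)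
     \<Rightarrow> (nat \<Rightarrow> real \<Rightarrow> 'a \<Rightarrow> real) \<Rightarrow> (real \<Rightarrow> 'a \<Rightarrow> real) \<Rightarrow> bool" where
  "msfbm M N a H \<xi> S \<longleftrightarrow> prob_space M \<and>
     (\<forall>i<N. sfbm M (H i) (\<xi> i)) \<and>
     prob_space.indep_vars M (\<lambda>_. Pi\<^sub>M {0..} (\<lambda>_. borel))
        (\<lambda>i \<omega>. restrict (\<lambda>t. \<xi> i t \<omega>) {0..}) {..<N} \<and>
     (\<forall>t\<ge>0. \<forall>\<omega>\<in>space M. S t \<omega> = (\<Sum>i<N. a i * \<xi> i t \<omega>))"

end

theory Submission
  imports Defs
begin

text \<open>With c = 2K, the increments of a sub-fractional Brownian motion of index K over [u, v]
  and [s, t] have covariance (G u - G v) / 2, where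
  G x = (t - x)^c - (s - x)^c + (x + t)^c - (x + s)^c.
  Now G' x = c (\<phi> x - \<phi> (-x)) with \<phi> y = (y + t)^(c - 1) - (y + s)^(c - 1), and (c - 1) \<phi> is
  strictly decreasing because c - 1 < 1. Hence (c - 1) G is strictly decreasing on [0, s], so the
  covariance has the sign of 2K - 1 (and vanishes for K = 1/2). For the mixture, independence of
  the components kills all cross terms, leaving the sum of a_i^2 times component covariances,
  which all share that sign.\<close>

lemma powr_shift_diff_strict_decreasing:
  fixes \<alpha> s t y z :: real
  assumes "\<alpha> < 1" "\<alpha> \<noteq> 0" "s < t" "- s < y" "y < z"
  shows "\<alpha> * ((z + t) powr \<alpha> - (z + s) powr \<alpha>) < \<alpha> * ((y + t) powr \<alpha> - (y + s) powr \<alpha>)"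
proof (rule DERIV_neg_imp_decreasing[OF \<open>y < z\<close>])
  fix x assume "y \<le> x" "x \<le> z"
  then have pos: "0 < x + s" "x + s < x + t" using assms by auto
  have "(x + t) powr (\<alpha> - 1) < (x + s) powr (\<alpha> - 1)"
    using powr_less_mono2_neg[of "\<alpha> - 1"] pos \<open>\<alpha> < 1\<close> by simp
  then have "\<alpha>\<^sup>2 * ((x + t) powr (\<alpha> - 1) - (x + s) powr (\<alpha> - 1)) < 0"
    using \<open>\<alpha> \<noteq> 0\<close> by (simp add: mult_pos_neg)
  moreover have "DERIV (\<lambda>x. \<alpha> * ((x + t) powr \<alpha> - (x + s) powr \<alpha>)) x :>
      \<alpha>\<^sup>2 * ((x + t) powr (\<alpha> - 1) - (x + s) powr (\<alpha> - 1))"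
    using pos by (auto intro!: derivative_eq_intros simp: power2_eq_square algebra_simps)
  ultimately show "\<exists>d. DERIV (\<lambda>x. \<alpha> * ((x + t) powr \<alpha> - (x + s) powr \<alpha>)) x :> d \<and> d < 0"
    by blast
qed

definition sfbm_cov :: "real \<Rightarrow> real \<Rightarrow> real \<Rightarrow> real" where
  "sfbm_cov K t s = t powr (2*K) + s powr (2*K) - ((t + s) powr (2*K) + \<bar>t - s\<bar> powr (2*K)) / 2"

definition increment_cov :: "(real \<Rightarrow> real \<Rightarrow> real) \<Rightarrow> real \<Rightarrow> real \<Rightarrow> real \<Rightarrow> real \<Rightarrow> real" where
  "increment_cov R u v s t = R v t - R v s - R u t + R u s"

lemma increment_cov_sfbm_cov_half:
  assumes "0 \<le> u" "u < v" "v \<le> s" "s < t"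
  shows "increment_cov (sfbm_cov (1/2)) u v s t = 0"
  using assms by (simp add: increment_cov_def sfbm_cov_def)

lemma increment_cov_sfbm_cov_sign:
  fixes K u v s t :: real
  assumes K: "0 < K" "K < 1" "K \<noteq> 1/2" and uvst: "0 \<le> u" "u < v" "v \<le> s" "s < t"
  shows "(2*K - 1) * increment_cov (sfbm_cov K) u v s t > 0"
proof -
  define c where "c = 2*K"
  define G where "G x = (t - x) powr c - (s - x) powr c + (x + t) powr c - (x + s) powr c" for x
  define \<phi> where "\<phi> y = (y + t) powr (c - 1) - (y + s) powr (c - 1)" for y
  have "(2*K - 1) * increment_cov (sfbm_cov K) u v s t = ((c - 1) * G u - (c - 1) * G v) / 2"
    using uvst by (simp add: increment_cov_def sfbm_cov_def G_def c_def abs_minus_commute field_simps)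
  moreover have "(c - 1) * G v < (c - 1) * G u"
  proof (rule DERIV_neg_imp_decreasing_open[OF \<open>u < v\<close>])
    fix x assume x: "u < x" "x < v"
    then have pos: "0 < s - x" "0 < t - x" "0 < x + s" "0 < x + t" using uvst by auto
    have "(c - 1) * \<phi> x < (c - 1) * \<phi> (- x)"
      unfolding \<phi>_def using powr_shift_diff_strict_decreasing[of "c - 1" s t "- x" x] K x uvst
      by (simp add: c_def)
    then have "c * ((c - 1) * \<phi> x - (c - 1) * \<phi> (- x)) < 0"
      using K by (simp add: c_def mult_pos_neg)
    then have "(c - 1) * (c * (\<phi> x - \<phi> (- x))) < 0"
      by (simp add: algebra_simps)
    moreover have "DERIV (\<lambda>x. (c - 1) * G x) x :> (c - 1) * (c * (\<phi> x - \<phi> (- x)))"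
      unfolding G_def \<phi>_def using pos
      by (auto intro!: derivative_eq_intros simp: algebra_simps)
    ultimately show "\<exists>d. DERIV (\<lambda>x. (c - 1) * G x) x :> d \<and> d < 0" by blast
  next
    show "continuous_on {u..v} (\<lambda>x. (c - 1) * G x)"
      unfolding G_def using uvst K
      by (intro continuous_intros continuous_on_powr') (auto simp: c_def)
  qed
  ultimately show ?thesis by simp
qed

definition square_integrable :: "'a measure \<Rightarrow> ('a \<Rightarrow> real) \<Rightarrow> bool" where
  "square_integrable M X \<longleftrightarrow> X \<in> borel_measurable M \<and> integrable M (\<lambda>\<omega>. (X \<omega>)\<^sup>2)"

lemma square_integrable_mult_integrable:
  assumes "square_integrable M X" "square_integrable M Y"
  shows "integrable M (\<lambda>\<omega>. X \<omega> * Y \<omega>)"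
proof (rule Bochner_Integration.integrable_bound)
  show "integrable M (\<lambda>\<omega>. (X \<omega>)\<^sup>2 + (Y \<omega>)\<^sup>2)"
    using assms unfolding square_integrable_def by auto
  have "\<bar>x\<bar> * \<bar>y\<bar> \<le> x\<^sup>2 + y\<^sup>2" for x y :: real
  proof -
    have "2 * (\<bar>x\<bar> * \<bar>y\<bar>) \<le> x\<^sup>2 + y\<^sup>2"
      using sum_squares_bound[of "\<bar>x\<bar>" "\<bar>y\<bar>"] by (simp add: mult.assoc)
    then show ?thesis using zero_le_mult_iff[of "\<bar>x\<bar>" "\<bar>y\<bar>"] by linarith
  qed
  then show "AE \<omega> in M. norm (X \<omega> * Y \<omega>) \<le> norm ((X \<omega>)\<^sup>2 + (Y \<omega>)\<^sup>2)"
    by (simp add: abs_mult)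
qed (use assms in \<open>auto simp: square_integrable_def\<close>)

lemma square_integrable_add:
  assumes "square_integrable M X" "square_integrable M Y"
  shows "square_integrable M (\<lambda>\<omega>. X \<omega> + Y \<omega>)"
proof -
  have "(\<lambda>\<omega>. (X \<omega> + Y \<omega>)\<^sup>2) = (\<lambda>\<omega>. (X \<omega>)\<^sup>2 + (Y \<omega>)\<^sup>2 + 2 * (X \<omega> * Y \<omega>))"
    by (simp add: power2_eq_square algebra_simps)
  then show ?thesis
    using assms square_integrable_mult_integrable[OF assms] unfolding square_integrable_def by auto
qed

lemma square_integrable_scale: "square_integrable M X \<Longrightarrow> square_integrable M (\<lambda>\<omega>. c * X \<omega>)"
  unfolding square_integrable_def by (auto simp: power_mult_distrib)

lemma square_integrable_diff:
  "square_integrable M X \<Longrightarrow> square_integrable M Y \<Longrightarrow> square_integrable M (\<lambda>\<omega>. X \<omega> - Y \<omega>)"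
  using square_integrable_add[of M X "\<lambda>\<omega>. (-1) * Y \<omega>"] square_integrable_scale[of M Y "-1"] by simp

lemma square_integrable_cong:
  "square_integrable M X \<Longrightarrow> (\<And>\<omega>. \<omega> \<in> space M \<Longrightarrow> X \<omega> = Y \<omega>) \<Longrightarrow> square_integrable M Y"
  unfolding square_integrable_def
  by (metis (no_types, lifting) Bochner_Integration.integrable_cong measurable_cong)

lemma (in finite_measure) square_integrable_integrable: "square_integrable M X \<Longrightarrow> integrable M X"
  unfolding square_integrable_def by (auto intro: square_integrable_imp_integrable)

lemma cov_centered:
  "integral\<^sup>L M X = 0 \<Longrightarrow> integral\<^sup>L M Y = 0 \<Longrightarrow> cov M X Y = (\<integral>\<omega>. X \<omega> * Y \<omega> \<partial>M)"
  unfolding cov_def by simp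

lemma cov_cong:
  "(\<And>\<omega>. \<omega> \<in> space M \<Longrightarrow> X \<omega> = X' \<omega>) \<Longrightarrow> (\<And>\<omega>. \<omega> \<in> space M \<Longrightarrow> Y \<omega> = Y' \<omega>)
    \<Longrightarrow> cov M X Y = cov M X' Y'"
  unfolding cov_def by (simp cong: Bochner_Integration.integral_cong)

lemma integral_mult_increments:
  assumes sq: "\<And>t. t \<in> T \<Longrightarrow> square_integrable M (X t)"
    and R: "\<And>t s. t \<in> T \<Longrightarrow> s \<in> T \<Longrightarrow> (\<integral>\<omega>. X t \<omega> * X s \<omega> \<partial>M) = R t s"
    and T: "u \<in> T" "v \<in> T" "s \<in> T" "t \<in> T"
  shows "(\<integral>\<omega>. (X v \<omega> - X u \<omega>) * (X t \<omega> - X s \<omega>) \<partial>M) = increment_cov R u v s t"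
proof -
  have int: "integrable M (\<lambda>\<omega>. X p \<omega> * X q \<omega>)" if "p \<in> T" "q \<in> T" for p q
    using sq that by (blast intro: square_integrable_mult_integrable)
  have "(\<integral>\<omega>. (X v \<omega> - X u \<omega>) * (X t \<omega> - X s \<omega>) \<partial>M) =
      (\<integral>\<omega>. (X v \<omega> * X t \<omega> - X v \<omega> * X s \<omega>) - (X u \<omega> * X t \<omega> - X u \<omega> * X s \<omega>) \<partial>M)"
    by (simp add: algebra_simps)
  also have "\<dots> = increment_cov R u v s t"
    using int T by (simp add: R increment_cov_def)
  finally show ?thesis .
qed

lemma (in prob_space) indep_vars_imp_indep_var:
  assumes "indep_vars M' X I" "i \<in> I" "j \<in> I" "i \<noteq> j"
  shows "indep_var (M' i) (X i) (M' j) (X j)"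
  using indep_var_compose[OF indep_var_restrict[OF assms(1), of "{i}" "{j}"],
      of "\<lambda>f. f i" "M' i" "\<lambda>f. f j" "M' j"] assms
  by (simp add: comp_def measurable_component_singleton)

lemma (in prob_space) cov_sum_indep_centered:
  assumes "finite I"
    and sq: "\<And>i. i \<in> I \<Longrightarrow> square_integrable M (X i)" "\<And>i. i \<in> I \<Longrightarrow> square_integrable M (Y i)"
    and centered: "\<And>i. i \<in> I \<Longrightarrow> integral\<^sup>L M (X i) = 0" "\<And>i. i \<in> I \<Longrightarrow> integral\<^sup>L M (Y i) = 0"
    and indep: "\<And>i j. i \<in> I \<Longrightarrow> j \<in> I \<Longrightarrow> i \<noteq> j \<Longrightarrow> indep_var borel (X i) borel (Y j)"
  shows "cov M (\<lambda>\<omega>. \<Sum>i\<in>I. a i * X i \<omega>) (\<lambda>\<omega>. \<Sum>i\<in>I. a i * Y i \<omega>) =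
    (\<Sum>i\<in>I. (a i)\<^sup>2 * cov M (X i) (Y i))"
proof -
  have int: "integrable M (X i)" "integrable M (Y i)" "integrable M (\<lambda>\<omega>. X i \<omega> * Y j \<omega>)"
    if "i \<in> I" "j \<in> I" for i j
    using sq that by (auto intro: square_integrable_integrable square_integrable_mult_integrable)
  have cross: "(\<integral>\<omega>. X i \<omega> * Y j \<omega> \<partial>M) = (if i = j then cov M (X i) (Y i) else 0)"
    if "i \<in> I" "j \<in> I" for i j
    using that int centered by (simp add: cov_centered indep_var_lebesgue_integral[OF indep])
  have "cov M (\<lambda>\<omega>. \<Sum>i\<in>I. a i * X i \<omega>) (\<lambda>\<omega>. \<Sum>j\<in>I. a j * Y j \<omega>) =
      (\<integral>\<omega>. (\<Sum>i\<in>I. \<Sum>j\<in>I. a i * a j * (X i \<omega> * Y j \<omega>)) \<partial>M)"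
    using int centered by (subst cov_centered) (simp_all add: sum_product algebra_simps)
  also have "\<dots> = (\<Sum>i\<in>I. \<Sum>j\<in>I. a i * a j * (\<integral>\<omega>. X i \<omega> * Y j \<omega> \<partial>M))"
    using int by (simp add: Bochner_Integration.integral_sum)
  also have "\<dots> = (\<Sum>i\<in>I. \<Sum>j\<in>I. if i = j then (a i)\<^sup>2 * cov M (X i) (Y i) else 0)"
    by (intro sum.cong refl) (simp add: cross power2_eq_square)
  also have "\<dots> = (\<Sum>i\<in>I. (a i)\<^sup>2 * cov M (X i) (Y i))"
    using \<open>finite I\<close> by simp
  finally show ?thesis .
qed

lemma fbm_moments:
  assumes "fbm M K B"
  shows "square_integrable M (B t)" "integral\<^sup>L M (B t) = 0"
    "(\<integral>\<omega>. B t \<omega> * B s \<omega> \<partial>M) = (\<bar>t\<bar> powr (2*K) + \<bar>s\<bar> powr (2*K) - \<bar>t - s\<bar> powr (2*K)) / 2"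
proof -
  have moments: "square_integrable M (B r)" "integral\<^sup>L M (B r) = 0" for r
    using assms unfolding fbm_def centered_gaussian_process_def square_integrable_def by auto
  then show "square_integrable M (B t)" "integral\<^sup>L M (B t) = 0" by auto
  show "(\<integral>\<omega>. B t \<omega> * B s \<omega> \<partial>M) = (\<bar>t\<bar> powr (2*K) + \<bar>s\<bar> powr (2*K) - \<bar>t - s\<bar> powr (2*K)) / 2"
    using assms moments(2) unfolding fbm_def by (metis cov_centered)
qed

lemma sfbm_moments:
  assumes "sfbm M K \<xi>" "0 \<le> t"
  shows "square_integrable M (\<xi> t)" "integral\<^sup>L M (\<xi> t) = 0"
    and "0 \<le> s \<Longrightarrow> (\<integral>\<omega>. \<xi> t \<omega> * \<xi> s \<omega> \<partial>M) = sfbm_cov K t s"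
proof -
  obtain B where B: "fbm M K B"
    and \<xi>: "\<And>r \<omega>. 0 \<le> r \<Longrightarrow> \<omega> \<in> space M \<Longrightarrow> \<xi> r \<omega> = (B r \<omega> + B (-r) \<omega>) / sqrt 2"
    using assms(1) unfolding sfbm_def by blast
  interpret prob_space M using B unfolding fbm_def by simp
  note B_moments = fbm_moments[OF B]
  have int: "integrable M (B r)" "integrable M (\<lambda>\<omega>. B p \<omega> * B q \<omega>)" for r p q
    using B_moments(1) by (auto intro: square_integrable_integrable square_integrable_mult_integrable)
  show "square_integrable M (\<xi> t)"
    using square_integrable_scale[OF square_integrable_add[OF B_moments(1) B_moments(1)], of "1 / sqrt 2" t "-t"]
    by (rule square_integrable_cong) (simp add: \<xi> \<open>0 \<le> t\<close>)
  have "integral\<^sup>L M (\<xi> t) = (\<integral>\<omega>. (B t \<omega> + B (-t) \<omega>) / sqrt 2 \<partial>M)"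
    using \<xi> \<open>0 \<le> t\<close> by (intro Bochner_Integration.integral_cong) auto
  also have "\<dots> = 0" using int B_moments(2) by simp
  finally show "integral\<^sup>L M (\<xi> t) = 0" .
  assume "0 \<le> s"
  have "(\<integral>\<omega>. \<xi> t \<omega> * \<xi> s \<omega> \<partial>M) =
    (\<integral>\<omega>. ((B t \<omega> * B s \<omega> + B t \<omega> * B (-s) \<omega>) + (B (-t) \<omega> * B s \<omega> + B (-t) \<omega> * B (-s) \<omega>)) / 2 \<partial>M)"
    using assms(2) \<open>0 \<le> s\<close> by (intro Bochner_Integration.integral_cong) (auto simp: \<xi> field_simps)
  also have "\<dots> = sfbm_cov K t s"
    using int assms(2) \<open>0 \<le> s\<close> by (simp add: B_moments(3) sfbm_cov_def abs_minus_commute field_simps)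
  finally show "(\<integral>\<omega>. \<xi> t \<omega> * \<xi> s \<omega> \<partial>M) = sfbm_cov K t s" .
qed

lemma msfbm_increment_cov:
  assumes "msfbm M N a H \<xi> S" and uvst: "0 \<le> u" "u < v" "v \<le> s" "s < t"
  shows "cov M (\<lambda>\<omega>. S v \<omega> - S u \<omega>) (\<lambda>\<omega>. S t \<omega> - S s \<omega>) =
    (\<Sum>i<N. (a i)\<^sup>2 * increment_cov (sfbm_cov (H i)) u v s t)"
proof -
  have "prob_space M" and sfbm: "\<And>i. i < N \<Longrightarrow> sfbm M (H i) (\<xi> i)"
    and paths_indep: "prob_space.indep_vars M (\<lambda>_. Pi\<^sub>M {0..} (\<lambda>_. borel))
        (\<lambda>i \<omega>. restrict (\<lambda>t. \<xi> i t \<omega>) {0..}) {..<N}"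
    and S: "\<And>t \<omega>. 0 \<le> t \<Longrightarrow> \<omega> \<in> space M \<Longrightarrow> S t \<omega> = (\<Sum>i<N. a i * \<xi> i t \<omega>)"
    using assms(1) unfolding msfbm_def by auto
  interpret prob_space M by fact
  define X where "X i = (\<lambda>\<omega>. \<xi> i v \<omega> - \<xi> i u \<omega>)" for i
  define Y where "Y i = (\<lambda>\<omega>. \<xi> i t \<omega> - \<xi> i s \<omega>)" for i
  have increment_measurable: "(\<lambda>f :: real \<Rightarrow> real. f q - f p) \<in> borel_measurable (Pi\<^sub>M {0..} (\<lambda>_. borel))"
    if "0 \<le> p" "0 \<le> q" for p q :: real
    using that by (intro borel_measurable_diff measurable_component_singleton) auto
  have indep: "indep_var borel (X i) borel (Y j)" if "i < N" "j < N" "i \<noteq> j" for i j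
    using indep_var_compose[OF indep_vars_imp_indep_var[OF paths_indep],
        OF _ _ _ increment_measurable increment_measurable, of i j u v s t] that uvst
    by (simp add: comp_def X_def Y_def)
  note moments = sfbm_moments[OF sfbm]
  have square_int: "square_integrable M (X i)" "square_integrable M (Y i)" if "i < N" for i
    using that uvst moments[OF that] by (simp_all add: X_def Y_def square_integrable_diff)
  have centered: "integral\<^sup>L M (X i) = 0" "integral\<^sup>L M (Y i) = 0" if "i < N" for i
    using that uvst moments[OF that] by (simp_all add: X_def Y_def square_integrable_integrable)
  have cov_increments: "cov M (X i) (Y i) = increment_cov (sfbm_cov (H i)) u v s t" if "i < N" for i
  proof -
    have "cov M (X i) (Y i) = (\<integral>\<omega>. (\<xi> i v \<omega> - \<xi> i u \<omega>) * (\<xi> i t \<omega> - \<xi> i s \<omega>) \<partial>M)"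
      using centered[OF that] by (simp add: cov_centered X_def Y_def)
    also have "\<dots> = increment_cov (sfbm_cov (H i)) u v s t"
      using moments[OF that] uvst by (intro integral_mult_increments[where T = "{0..}"]) auto
    finally show ?thesis .
  qed
  have "cov M (\<lambda>\<omega>. S v \<omega> - S u \<omega>) (\<lambda>\<omega>. S t \<omega> - S s \<omega>) =
      cov M (\<lambda>\<omega>. \<Sum>i<N. a i * X i \<omega>) (\<lambda>\<omega>. \<Sum>i<N. a i * Y i \<omega>)"
    using uvst by (intro cov_cong) (simp_all add: S X_def Y_def sum_subtractf[symmetric] algebra_simps)
  also have "\<dots> = (\<Sum>i<N. (a i)\<^sup>2 * cov M (X i) (Y i))"
    by (rule cov_sum_indep_centered) (use indep square_int centered in auto)
  also have "\<dots> = (\<Sum>i<N. (a i)\<^sup>2 * increment_cov (sfbm_cov (H i)) u v s t)"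
    using cov_increments by simp
  finally show ?thesis .
qed

lemma sum_weighted_squares_pos:
  fixes a g :: "'i \<Rightarrow> real"
  assumes "finite I" "\<And>i. i \<in> I \<Longrightarrow> 0 < g i" "j \<in> I" "a j \<noteq> 0"
  shows "0 < (\<Sum>i\<in>I. (a i)\<^sup>2 * g i)"
proof (rule sum_pos2[OF assms(1,3)])
  show "0 < (a j)\<^sup>2 * g j" using assms(2-4) by simp
  show "0 \<le> (a i)\<^sup>2 * g i" if "i \<in> I" for i using assms(2)[OF that] by simp
qed

theorem corollary7:
  fixes M :: "'a measure" and N :: nat and a H :: "nat \<Rightarrow> real"
    and \<xi> :: "nat \<Rightarrow> real \<Rightarrow> 'a \<Rightarrow> real" and S :: "real \<Rightarrow> 'a \<Rightarrow> real"
  assumes "N \<ge> 1"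
    and "\<forall>i<N. 0 < H i \<and> H i < 1"
    and "\<exists>i<N. a i \<noteq> 0"
    and "msfbm M N a H \<xi> S"
  shows "\<forall>u v s t. 0 \<le> u \<and> u < v \<and> v \<le> s \<and> s < t \<longrightarrow>
     ((\<forall>i<N. H i = 1/2) \<longrightarrow> cov M (\<lambda>\<omega>. S v \<omega> - S u \<omega>) (\<lambda>\<omega>. S t \<omega> - S s \<omega>) = 0) \<and>
     ((\<forall>i<N. H i > 1/2) \<longrightarrow> cov M (\<lambda>\<omega>. S v \<omega> - S u \<omega>) (\<lambda>\<omega>. S t \<omega> - S s \<omega>) > 0) \<and>
     ((\<forall>i<N. H i < 1/2) \<longrightarrow> cov M (\<lambda>\<omega>. S v \<omega> - S u \<omega>) (\<lambda>\<omega>. S t \<omega> - S s \<omega>) < 0)"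
proof (intro allI impI conjI)
  fix u v s t :: real
  assume "0 \<le> u \<and> u < v \<and> v \<le> s \<and> s < t"
  then have uvst: "0 \<le> u" "u < v" "v \<le> s" "s < t" by auto
  define g where "g i = increment_cov (sfbm_cov (H i)) u v s t" for i
  have cov_S: "cov M (\<lambda>\<omega>. S v \<omega> - S u \<omega>) (\<lambda>\<omega>. S t \<omega> - S s \<omega>) = (\<Sum>i<N. (a i)\<^sup>2 * g i)"
    unfolding g_def using msfbm_increment_cov[OF assms(4) uvst] .
  obtain j where j: "j \<in> {..<N}" "a j \<noteq> 0" using assms(3) by auto
  have pos: "0 < g i" if "i < N" "1/2 < H i" for i
    using increment_cov_sfbm_cov_sign[of "H i" u v s t] assms(2) that uvst
    by (simp add: g_def zero_less_mult_iff)
  have neg: "g i < 0" if "i < N" "H i < 1/2" for i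
    using increment_cov_sfbm_cov_sign[of "H i" u v s t] assms(2) that uvst
    by (simp add: g_def zero_less_mult_iff)
  show "cov M (\<lambda>\<omega>. S v \<omega> - S u \<omega>) (\<lambda>\<omega>. S t \<omega> - S s \<omega>) = 0" if half: "\<forall>i<N. H i = 1/2"
  proof -
    have "g i = 0" if "i < N" for i
      unfolding g_def half[rule_format, OF that] by (rule increment_cov_sfbm_cov_half[OF uvst])
    then show ?thesis by (simp add: cov_S)
  qed
  show "cov M (\<lambda>\<omega>. S v \<omega> - S u \<omega>) (\<lambda>\<omega>. S t \<omega> - S s \<omega>) > 0" if "\<forall>i<N. H i > 1/2"
    unfolding cov_S using j pos that by (intro sum_weighted_squares_pos[where j = j]) auto
  show "cov M (\<lambda>\<omega>. S v \<omega> - S u \<omega>) (\<lambda>\<omega>. S t \<omega> - S s \<omega>) < 0" if "\<forall>i<N. H i < 1/2"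
  proof -
    have "0 < (\<Sum>i<N. (a i)\<^sup>2 * - g i)"
      using j neg that by (intro sum_weighted_squares_pos[where j = j]) auto
    then show ?thesis by (simp add: cov_S sum_negf)
  qed
qed

end
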